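(* Let $(X,d)$ be a separable metric space admitting a weak convergence, and let $p\ge 1$. For any $\mu\in\mathcal{P}_{p-1}(X)$, the set $M_p(\mu)$ is non-empty and $d$-compact.
   Context: A convergence $c$ on a set $X$ is a rule assigning at most one point of $X$ as the "limit" of each sequence in $X$, such that whenever a sequence has limit $x$, every subsequence also has limit $x$. A convergence $w$ on $X$ is a weak convergence for $(X,d)$ if: (W1) whenever $\sup_n d(x_n,y)<\infty$ for some $y$, some subsequence converges in $w$ to some point of $X$; (W2) whenever $x_n\to x$ in $w$, $d(x,y)\le\liminf_n d(x_n,y)$ for all $y\in X$; (W3) whenever $x_n\to x$ in $w$ and $d(x_n,y)\to d(x,y)$ for some $y\in X$, then $d(x_n,x)\to0$. $(X,d)$ admits a weak convergence if such a $w$ exists. $\mathcal{P}_{p-1}(X)$ is the set of Borel probability measures $\mu$ on $(X,d)$ with $\int_X d^{p-1}(x,y)\,d\mu(y)<\infty$ for some (equivalently all) $x\in X$. For such $\mu$, $W_p(\mu,x,x'):=\int_X (d^p(x,y)-d^p(x',y))\,d\mu(y)$ and $M_p(\mu):=\{x\in X: W_p(\mu,x,x')\le 0 \text{ for all } x'\in X\}$. *)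

theory Defs
  imports "HOL-Probability.Probability"
begin

text \<open>The metric space (X,d) is the type 'a of class metric_space with d = dist.\<close>

text \<open>Real power with the convention t^0 = 1 (also for t = 0), for t >= 0.\<close>
definition rpow :: "real \<Rightarrow> real \<Rightarrow> real" where
  "rpow t q = (if q = 0 then 1 else t powr q)"

definition separable_metric :: "'a::metric_space itself \<Rightarrow> bool" where
  "separable_metric _ \<longleftrightarrow> (\<exists>D::'a set. countable D \<and> closure D = UNIV)"

definition is_convergence :: "((nat \<Rightarrow> 'a) \<Rightarrow> 'a \<Rightarrow> bool) \<Rightarrow> bool" where
  "is_convergence c \<longleftrightarrow>
     (\<forall>s x y. c s x \<and> c s y \<longrightarrow> x = y) \<and>
     (\<forall>s x (r::nat \<Rightarrow> nat). c s x \<and> strict_mono r \<longrightarrow> c (s \<circ> r) x)"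

definition is_weak_convergence :: "((nat \<Rightarrow> 'a::metric_space) \<Rightarrow> 'a \<Rightarrow> bool) \<Rightarrow> bool" where
  "is_weak_convergence w \<longleftrightarrow> is_convergence w \<and>
     (\<forall>s y. bdd_above (range (\<lambda>n. dist (s n) y)) \<longrightarrow>
            (\<exists>(r::nat \<Rightarrow> nat) x. strict_mono r \<and> w (s \<circ> r) x)) \<and>
     (\<forall>s x. w s x \<longrightarrow> (\<forall>y. ereal (dist x y) \<le> liminf (\<lambda>n. ereal (dist (s n) y)))) \<and>
     (\<forall>s x y. w s x \<and> (\<lambda>n. dist (s n) y) \<longlonglongrightarrow> dist x y \<longrightarrow>
            (\<lambda>n. dist (s n) x) \<longlonglongrightarrow> 0)"

definition admits_weak_convergence :: "'a::metric_space itself \<Rightarrow> bool" where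
  "admits_weak_convergence _ \<longleftrightarrow> (\<exists>w::(nat \<Rightarrow> 'a) \<Rightarrow> 'a \<Rightarrow> bool. is_weak_convergence w)"

definition P_moment :: "real \<Rightarrow> 'a::metric_space measure set" where
  "P_moment q = {\<mu>. prob_space \<mu> \<and> sets \<mu> = sets borel \<and>
      (\<exists>x. (\<integral>\<^sup>+ y. ennreal (rpow (dist x y) q) \<partial>\<mu>) < \<infinity>)}"

definition Wp :: "real \<Rightarrow> 'a::metric_space measure \<Rightarrow> 'a \<Rightarrow> 'a \<Rightarrow> real" where
  "Wp p \<mu> x x' = (\<integral> y. (rpow (dist x y) p - rpow (dist x' y) p) \<partial>\<mu>)"

definition Mp :: "real \<Rightarrow> 'a::metric_space measure \<Rightarrow> 'a set" where
  "Mp p \<mu> = {x. \<forall>x'. Wp p \<mu> x x' \<le> 0}"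

end

theory Submission
  imports Defs
begin

(* Fix x0 and let V x = int (d(x,y)^p - d(x0,y)^p) dmu(y), the functional frechet. The mean value bound
   |a^p - b^p| <= p |a - b| max(a,b)^(p-1) dominates the integrand by p d(x,x0) (d(x0,y) + C)^(p-1),
   so V is finite under a (p-1)-moment, and W_p(mu,x,x') = V x - V x': M_p(mu) is the set of
   minimisers of V.
   V is coercive: if V x_n <= 0 and d(x_n,x0) -> infinity, Fatou's lemma applied to the integrands
   divided by d(x_n,x0)^p makes some V x_n / d(x_n,x0)^p positive. By (W2) and Fatou,
   V x <= lim V x_n whenever a bounded sequence x_n converges weakly to x; with (W1) a minimising
   sequence therefore has a weak limit point that minimises V.
   For compactness let x_n be minimisers with weak limit x, again a minimiser. If
   d(x,y) < liminf d(x_n,y) held for every y, Fatou's lemma would give lim V x_n > V x; so for some y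
   a subsequence has d(x_n,y) -> d(x,y), and (W3) turns weak into metric convergence. *)

section \<open>Powers of distances\<close>

lemma rpow_nonneg: "0 \<le> rpow t q"
  by (simp add: rpow_def)

lemma rpow_mono: "0 \<le> q \<Longrightarrow> 0 \<le> a \<Longrightarrow> a \<le> b \<Longrightarrow> rpow a q \<le> rpow b q"
  by (simp add: rpow_def powr_mono2)

lemma rpow_strict_mono: "0 < q \<Longrightarrow> 0 \<le> a \<Longrightarrow> a < b \<Longrightarrow> rpow a q < rpow b q"
  by (simp add: rpow_def powr_less_mono2)

lemma rpow_mult: "0 \<le> a \<Longrightarrow> 0 \<le> b \<Longrightarrow> rpow (a * b) q = rpow a q * rpow b q"
  by (simp add: rpow_def powr_mult)

lemma rpow_ge_self: "1 \<le> q \<Longrightarrow> 1 \<le> a \<Longrightarrow> a \<le> rpow a q"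
  using powr_mono[of 1 q a] by (simp add: rpow_def)

lemma rpow_add_le:
  assumes "0 \<le> q" "0 \<le> a" "0 \<le> b"
  shows "rpow (a + b) q \<le> rpow 2 q * (rpow a q + rpow b q)"
proof -
  have "rpow (a + b) q \<le> rpow (2 * max a b) q"
    using assms by (intro rpow_mono) auto
  also have "\<dots> = rpow 2 q * rpow (max a b) q"
    using assms by (intro rpow_mult) auto
  also have "rpow (max a b) q \<le> rpow a q + rpow b q"
    by (simp add: max_def rpow_nonneg)
  then have "rpow 2 q * rpow (max a b) q \<le> rpow 2 q * (rpow a q + rpow b q)"
    by (intro mult_left_mono rpow_nonneg)
  finally show ?thesis .
qed

lemma borel_measurable_rpow [measurable (raw)]:
  "f \<in> borel_measurable M \<Longrightarrow> (\<lambda>y. rpow (f y) q) \<in> borel_measurable M"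
  unfolding rpow_def by (cases "q = 0") simp_all

lemma rpow_diff_le:
  assumes "1 \<le> p" "0 \<le> a" "0 \<le> b"
  shows "rpow b p - rpow a p \<le> p * max 0 (b - a) * rpow b (p - 1)"
proof (cases "b \<le> a")
  case True
  then show ?thesis using assms rpow_mono[of p b a] by simp
next
  case False
  then have ab: "a < b" by simp
  have "continuous_on {a..b} (\<lambda>t. t powr p)"
    using assms by (intro continuous_on_powr' continuous_on_id continuous_on_const) auto
  moreover have "(\<lambda>t. t powr p) differentiable at t" if "a < t" for t
    using assms that has_real_derivative_powr[of t p] unfolding real_differentiable_def by auto
  ultimately obtain l z where z: "a < z" "z < b"
    and deriv: "((\<lambda>t. t powr p) has_real_derivative l) (at z)"
    and mvt: "b powr p - a powr p = (b - a) * l"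
    using MVT[OF ab] by blast
  have "l = p * z powr (p - 1)"
    using DERIV_unique[OF deriv has_real_derivative_powr[of z p]] z assms by simp
  with mvt have mvt: "b powr p - a powr p = (b - a) * (p * z powr (p - 1))"
    by simp
  have "p * z powr (p - 1) \<le> p * b powr (p - 1)"
    using z assms by (intro mult_left_mono powr_mono2) auto
  then have "b powr p - a powr p \<le> (b - a) * (p * b powr (p - 1))"
    unfolding mvt using False by (auto intro: mult_left_mono)
  then show ?thesis using assms False by (simp add: rpow_def mult_ac)
qed

lemma rpow_dist_diff_ge:
  assumes "1 \<le> p"
  shows "- (p * dist x z * rpow (dist z y) (p - 1)) \<le> rpow (dist x y) p - rpow (dist z y) p"
proof -
  have "rpow (dist z y) p - rpow (dist x y) p \<le> p * max 0 (dist z y - dist x y) * rpow (dist z y) (p - 1)"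
    using assms by (intro rpow_diff_le) auto
  also have "\<dots> \<le> p * dist x z * rpow (dist z y) (p - 1)"
    using assms dist_triangle[of z y x]
    by (intro mult_right_mono mult_left_mono rpow_nonneg) (auto simp: dist_commute)
  finally show ?thesis by simp
qed

lemma rpow_dist_diff_abs_le:
  assumes "1 \<le> p"
  shows "\<bar>rpow (dist a y) p - rpow (dist b y) p\<bar>
    \<le> p * dist a b * rpow (dist z y + (dist z a + dist z b)) (p - 1)"
proof -
  have bound: "p * dist a b * rpow (dist u y) (p - 1)
      \<le> p * dist a b * rpow (dist z y + (dist z a + dist z b)) (p - 1)"
    if "dist z u \<le> dist z a + dist z b" for u
    using that assms dist_triangle3[of u y z] by (intro mult_left_mono rpow_mono) auto
  show ?thesis
    using bound[of a] bound[of b] rpow_dist_diff_ge[OF assms, of a b y]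
      rpow_dist_diff_ge[OF assms, of b a y] dist_commute[of a b]
    unfolding abs_le_iff by simp
qed

lemma rpow_dist_diff_div_ge:
  assumes "1 \<le> p" "1 \<le> dist x z"
  shows "- (p * rpow (dist z y) (p - 1)) \<le> (rpow (dist x y) p - rpow (dist z y) p) / rpow (dist x z) p"
proof -
  have "p * dist x z * rpow (dist z y) (p - 1) \<le> p * rpow (dist x z) p * rpow (dist z y) (p - 1)"
    using assms by (intro mult_right_mono mult_left_mono rpow_nonneg rpow_ge_self) auto
  then have "- (p * rpow (dist z y) (p - 1)) * rpow (dist x z) p \<le> rpow (dist x y) p - rpow (dist z y) p"
    using rpow_dist_diff_ge[OF assms(1), of x z y] by (simp add: mult_ac)
  moreover have "0 < rpow (dist x z) p"
    using assms rpow_ge_self[of p "dist x z"] by linarith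
  ultimately show ?thesis
    by (simp add: pos_le_divide_eq)
qed

lemma rpow_dist_diff_div_ge_far:
  assumes "0 < p" "0 < dist x z" and far: "4 * dist z y \<le> dist x z"
  shows "rpow (1/2) p - rpow (1/4) p \<le> (rpow (dist x y) p - rpow (dist z y) p) / rpow (dist x z) p"
proof -
  have "dist x z / 2 \<le> dist x y"
    using far dist_triangle[of x z y] zero_le_dist[of x y] dist_commute[of z y] by linarith
  then have "rpow (1/2) p * rpow (dist x z) p \<le> rpow (dist x y) p"
    using assms rpow_mult[of "1/2" "dist x z" p] rpow_mono[of p "dist x z / 2" "dist x y"] by simp
  moreover have "rpow (dist z y) p \<le> rpow (1/4) p * rpow (dist x z) p"
    using assms rpow_mult[of "1/4" "dist x z" p] rpow_mono[of p "dist z y" "dist x z / 4"] by simp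
  moreover have "0 < rpow (dist x z) p"
    using assms rpow_strict_mono[of p 0 "dist x z"] by (simp add: rpow_def)
  ultimately show ?thesis
    by (simp add: pos_le_divide_eq left_diff_distrib)
qed

section \<open>Liminf bounds and Fatou's lemma\<close>

lemma ennreal_le_Liminf:
  assumes "\<And>\<epsilon>. 0 < \<epsilon> \<Longrightarrow> eventually (\<lambda>n. c - \<epsilon> < u n) F"
  shows "ennreal c \<le> Liminf F (\<lambda>n. ennreal (u n))"
  unfolding le_Liminf_iff
proof (intro allI impI)
  fix z assume "z < ennreal c"
  then obtain t where t: "z = ennreal t" "0 \<le> t" "t < c"
    by (cases z rule: ennreal_cases) (auto simp: ennreal_less_iff)
  show "eventually (\<lambda>n. z < ennreal (u n)) F"
    using assms[of "c - t"] t by (auto elim!: eventually_mono intro: ennreal_lessI)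
qed

lemma eventually_rpow_gt_of_le_liminf:
  assumes "1 \<le> p" "0 \<le> a" "\<And>n. 0 \<le> b n" "0 < \<epsilon>"
    and le: "ereal a \<le> liminf (\<lambda>n. ereal (b n))"
  shows "eventually (\<lambda>n. rpow a p - \<epsilon> < rpow (b n) p) sequentially"
proof -
  define h where "h = rpow a (p - 1)"
  define \<delta> where "\<delta> = \<epsilon> / (p * (h + 1))"
  have h: "0 \<le> h" unfolding h_def by (rule rpow_nonneg)
  have \<delta>: "0 < \<delta>" and \<epsilon>: "p * \<delta> * (h + 1) = \<epsilon>"
    using assms h by (auto simp: \<delta>_def)
  have "ereal (a - \<delta>) < ereal a"
    using \<delta> by simp
  then have "ereal (a - \<delta>) < liminf (\<lambda>n. ereal (b n))"
    using le by order
  then have "eventually (\<lambda>n. a - \<delta> < b n) sequentially"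
    by (auto dest: less_LiminfD elim: eventually_mono)
  then show ?thesis
  proof (rule eventually_mono)
    fix n assume "a - \<delta> < b n"
    have "rpow a p - rpow (b n) p \<le> p * max 0 (a - b n) * h"
      unfolding h_def using assms by (intro rpow_diff_le) auto
    also have "\<dots> \<le> p * \<delta> * h"
      using \<open>a - \<delta> < b n\<close> \<delta> assms h by (intro mult_right_mono mult_left_mono) auto
    also have "\<dots> < p * \<delta> * (h + 1)"
      using \<delta> assms by simp
    also have "\<dots> = \<epsilon>"
      by (rule \<epsilon>)
    finally show "rpow a p - \<epsilon> < rpow (b n) p" by simp
  qed
qed

lemma eventually_rpow_ge_of_less_liminf:
  assumes "1 \<le> p" "0 \<le> a"
    and less: "ereal a < liminf (\<lambda>n. ereal (b n))"
  obtains \<eta> where "0 < \<eta>" "eventually (\<lambda>n. rpow a p + \<eta> \<le> rpow (b n) p) sequentially"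
proof -
  obtain c where "ereal a < ereal c" "ereal c < liminf (\<lambda>n. ereal (b n))"
    using less ereal_dense2 ereal_dense3 by (metis less_ereal.simps(1))
  then have ac: "a < c" and ev: "eventually (\<lambda>n. c < b n) sequentially"
    by (auto dest: less_LiminfD elim: eventually_mono)
  show ?thesis
  proof
    show "0 < rpow c p - rpow a p"
      using ac assms by (simp add: rpow_strict_mono)
    show "eventually (\<lambda>n. rpow a p + (rpow c p - rpow a p) \<le> rpow (b n) p) sequentially"
      using ev by (rule eventually_mono) (use ac assms in \<open>auto intro: rpow_mono\<close>)
  qed
qed

lemma fatou_integrable_minorant:
  fixes f :: "nat \<Rightarrow> 'a \<Rightarrow> real"
  assumes f: "\<And>n. integrable M (f n)" and g: "integrable M g"
    and minorant: "\<And>n y. y \<in> space M \<Longrightarrow> 0 \<le> f n y + g y"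
  shows "(\<integral>\<^sup>+ y. liminf (\<lambda>n. ennreal (f n y + g y)) \<partial>M)
    \<le> liminf (\<lambda>n. ennreal (integral\<^sup>L M (f n) + integral\<^sup>L M g))"
proof -
  have "(\<integral>\<^sup>+ y. liminf (\<lambda>n. ennreal (f n y + g y)) \<partial>M) \<le> liminf (\<lambda>n. \<integral>\<^sup>+ y. ennreal (f n y + g y) \<partial>M)"
    using f g by (intro nn_integral_liminf) auto
  also have "(\<lambda>n. \<integral>\<^sup>+ y. ennreal (f n y + g y) \<partial>M) = (\<lambda>n. ennreal (integral\<^sup>L M (f n) + integral\<^sup>L M g))"
    using f g minorant by (simp add: nn_integral_eq_integral)
  finally show ?thesis .
qed

lemma (in prob_space) integral_pos_of_eventually_ge:
  fixes f :: "nat \<Rightarrow> 'a \<Rightarrow> real"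
  assumes f: "\<And>n. integrable M (f n)" and g: "integrable M g" and g_nonneg: "\<And>y. 0 \<le> g y"
    and minorant: "\<And>n y. 0 \<le> f n y + g y"
    and ev: "\<And>y. eventually (\<lambda>n. c \<le> f n y) sequentially" and "0 < c"
  obtains n where "0 < integral\<^sup>L M (f n)"
proof (rule ccontr)
  assume "\<not> thesis"
  with that have le: "integral\<^sup>L M (f n) \<le> 0" for n
    by (meson not_le)
  have "ennreal (c + integral\<^sup>L M g) = ennreal (\<integral>y. c + g y \<partial>M)"
    using g by (simp add: prob_space)
  also have "\<dots> = (\<integral>\<^sup>+ y. ennreal (c + g y) \<partial>M)"
    using g g_nonneg \<open>0 < c\<close> by (intro nn_integral_eq_integral[symmetric]) (auto intro: add_nonneg_nonneg)
  also have "\<dots> \<le> (\<integral>\<^sup>+ y. liminf (\<lambda>n. ennreal (f n y + g y)) \<partial>M)"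
  proof (intro nn_integral_mono Liminf_bounded)
    show "eventually (\<lambda>n. ennreal (c + g y) \<le> ennreal (f n y + g y)) sequentially" for y
      using ev[of y] by (rule eventually_mono) (simp add: ennreal_leI)
  qed
  also have "\<dots> \<le> liminf (\<lambda>n. ennreal (integral\<^sup>L M (f n) + integral\<^sup>L M g))"
    using f g minorant by (rule fatou_integrable_minorant)
  also have "\<dots> \<le> ennreal (integral\<^sup>L M g)"
    using le by (intro Liminf_le always_eventually allI ennreal_leI) auto
  finally show False
    using \<open>0 < c\<close> Bochner_Integration.integral_nonneg[of M g] g_nonneg
    by (simp add: ennreal_le_iff)
qed

section \<open>Weak convergences\<close>

context
  fixes w :: "(nat \<Rightarrow> 'a::metric_space) \<Rightarrow> 'a \<Rightarrow> bool"
  assumes weak: "is_weak_convergence w"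
begin

lemma weak_convergence_subseq:
  assumes "w s x" "strict_mono r"
  shows "w (s \<circ> r) x"
proof -
  have "\<forall>s x (r::nat \<Rightarrow> nat). w s x \<and> strict_mono r \<longrightarrow> w (s \<circ> r) x"
    using weak unfolding is_weak_convergence_def is_convergence_def by (elim conjE)
  then show ?thesis
    using assms by blast
qed

lemma weak_convergence_bounded_subseq:
  fixes s :: "nat \<Rightarrow> 'a"
  assumes "bounded (range s)"
  obtains r x where "strict_mono r" "w (s \<circ> r) x"
proof -
  obtain e where "\<forall>z\<in>range s. dist (s 0) z \<le> e"
    using assms unfolding bounded_any_center[of _ "s 0"] by blast
  then have "bdd_above (range (\<lambda>n. dist (s n) (s 0)))"
    by (intro bdd_aboveI2) (auto simp: dist_commute)
  then have "\<exists>r x. strict_mono r \<and> w (s \<circ> r) x"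
    using weak unfolding is_weak_convergence_def by blast
  then show ?thesis
    using that by blast
qed

lemma weak_convergence_liminf_dist:
  assumes "w s x"
  shows "ereal (dist x y) \<le> liminf (\<lambda>n. ereal (dist (s n) y))"
  using weak assms unfolding is_weak_convergence_def by auto

lemma weak_convergence_dist_tendsto:
  assumes "w s x" "(\<lambda>n. dist (s n) y) \<longlonglongrightarrow> dist x y"
  shows "s \<longlonglongrightarrow> x"
proof -
  have "\<forall>s x y. w s x \<and> (\<lambda>n. dist (s n) y) \<longlonglongrightarrow> dist x y \<longrightarrow> (\<lambda>n. dist (s n) x) \<longlonglongrightarrow> 0"
    using weak unfolding is_weak_convergence_def by (elim conjE)
  then have "(\<lambda>n. dist (s n) x) \<longlonglongrightarrow> 0"
    using assms by blast
  then show ?thesis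
    by (rule tendsto_dist_iff[THEN iffD2])
qed

lemma weak_convergence_subseq_tendsto:
  assumes ws: "w s x" and le: "liminf (\<lambda>n. ereal (dist (s n) y)) \<le> ereal (dist x y)"
  obtains r where "strict_mono r" "(s \<circ> r) \<longlonglongrightarrow> x"
proof -
  obtain r where r: "strict_mono r"
    and lim: "((\<lambda>n. ereal (dist (s n) y)) \<circ> r) \<longlonglongrightarrow> liminf (\<lambda>n. ereal (dist (s n) y))"
    using liminf_subseq_lim by blast
  have "liminf (\<lambda>n. ereal (dist (s n) y)) = ereal (dist x y)"
    using le weak_convergence_liminf_dist[OF ws, of y] by (rule antisym)
  with lim have "(\<lambda>n. dist ((s \<circ> r) n) y) \<longlonglongrightarrow> dist x y"
    by (simp add: o_def lim_ereal)
  with weak_convergence_subseq[OF ws r] have "(s \<circ> r) \<longlonglongrightarrow> x"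
    by (rule weak_convergence_dist_tendsto)
  with r show ?thesis
    by (rule that)
qed

end

section \<open>The renormalised Frechet functional\<close>

locale finite_moment = prob_space M for M :: "'a::metric_space measure" +
  fixes p :: real and x0 :: 'a
  assumes p_ge_1: "1 \<le> p" and sets_M: "sets M = sets borel"
    and moment: "(\<integral>\<^sup>+ y. ennreal (rpow (dist x0 y) (p - 1)) \<partial>M) < \<infinity>"
begin

lemma borel_measurable_dist_M [measurable]: "(\<lambda>y. dist a y) \<in> borel_measurable M"
  unfolding measurable_cong_sets[OF sets_M refl]
  by (intro borel_measurable_continuous_onI continuous_intros)

lemma integrable_rpow_dist_base: "integrable M (\<lambda>y. rpow (dist x0 y) (p - 1))"
  using moment by (intro integrableI_bounded) (simp_all add: rpow_nonneg)

lemma integrable_rpow_dist_shift: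
  assumes "0 \<le> S"
  shows "integrable M (\<lambda>y. rpow (dist x0 y + S) (p - 1))"
proof (rule Bochner_Integration.integrable_bound)
  show "integrable M (\<lambda>y. rpow 2 (p - 1) * (rpow (dist x0 y) (p - 1) + rpow S (p - 1)))"
    using integrable_rpow_dist_base by simp
  show "AE y in M. norm (rpow (dist x0 y + S) (p - 1))
      \<le> norm (rpow 2 (p - 1) * (rpow (dist x0 y) (p - 1) + rpow S (p - 1)))"
    using assms p_ge_1 rpow_add_le[of "p - 1" "dist x0 _" S] by (simp add: rpow_nonneg)
qed measurable

lemma integrable_rpow_dist_diff: "integrable M (\<lambda>y. rpow (dist a y) p - rpow (dist b y) p)"
proof (rule Bochner_Integration.integrable_bound)
  show "integrable M (\<lambda>y. p * dist a b * rpow (dist x0 y + (dist x0 a + dist x0 b)) (p - 1))"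
    using integrable_rpow_dist_shift by simp
  show "AE y in M. norm (rpow (dist a y) p - rpow (dist b y) p)
      \<le> norm (p * dist a b * rpow (dist x0 y + (dist x0 a + dist x0 b)) (p - 1))"
    using p_ge_1 by (intro AE_I2) (simp add: rpow_nonneg rpow_dist_diff_abs_le)
qed measurable

definition frechet :: "'a \<Rightarrow> real" where
  "frechet x = Wp p M x x0"

lemma frechet_base [simp]: "frechet x0 = 0"
  by (simp add: frechet_def Wp_def)

lemma Wp_eq_frechet_diff: "Wp p M a b = frechet a - frechet b"
  unfolding frechet_def Wp_def
  by (subst Bochner_Integration.integral_diff[symmetric]) (simp_all add: integrable_rpow_dist_diff)

lemma Mp_eq_frechet_minimisers: "Mp p M = {x. \<forall>x'. frechet x \<le> frechet x'}"
  by (simp add: Mp_def Wp_eq_frechet_diff)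

lemma frechet_lower_bound: "- (p * dist x x0 * (\<integral>y. rpow (dist x0 y) (p - 1) \<partial>M)) \<le> frechet x"
proof -
  have "(\<integral>y. - (p * dist x x0 * rpow (dist x0 y) (p - 1)) \<partial>M) \<le> frechet x"
    unfolding frechet_def Wp_def using p_ge_1
    by (intro integral_mono integrable_rpow_dist_diff rpow_dist_diff_ge)
      (simp_all add: integrable_rpow_dist_base)
  then show ?thesis
    by simp
qed

lemma bounded_frechet_sublevel: "bounded {x. frechet x \<le> 0}"
proof (rule ccontr)
  assume "\<not> ?thesis"
  then have "\<exists>x. frechet x \<le> 0 \<and> real n + 1 < dist x x0" for n
    unfolding bounded_any_center[of _ x0] by (metis (mono_tags) dist_commute mem_Collect_eq not_le)
  then obtain s where s: "\<And>n. frechet (s n) \<le> 0" "\<And>n. real n + 1 < dist (s n) x0"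
    by metis
  define f where "f n y = (rpow (dist (s n) y) p - rpow (dist x0 y) p) / rpow (dist (s n) x0) p"
    for n y
  obtain n where "0 < integral\<^sup>L M (f n)"
  proof (rule integral_pos_of_eventually_ge)
    show "integrable M (f n)" for n
      unfolding f_def by (intro integrable_divide_zero integrable_rpow_dist_diff)
    show "integrable M (\<lambda>y. p * rpow (dist x0 y) (p - 1))"
      by (intro integrable_mult_right integrable_rpow_dist_base)
    show "0 \<le> p * rpow (dist x0 y) (p - 1)" for y
      using p_ge_1 by (simp add: rpow_nonneg)
    show "0 \<le> f n y + p * rpow (dist x0 y) (p - 1)" for n y
      unfolding f_def using rpow_dist_diff_div_ge[OF p_ge_1, of "s n" x0 y] s(2)[of n] by simp
    show "eventually (\<lambda>n. rpow (1/2) p - rpow (1/4) p \<le> f n y) sequentially" for y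
      using eventually_ge_at_top[of "nat \<lceil>4 * dist x0 y\<rceil>"]
    proof eventually_elim
      case (elim n)
      then have "4 * dist x0 y \<le> dist (s n) x0"
        using s(2)[of n] by linarith
      then show ?case
        unfolding f_def using p_ge_1 s(2)[of n] by (intro rpow_dist_diff_div_ge_far) auto
    qed
    show "0 < rpow (1/2) p - rpow (1/4) p"
      using p_ge_1 by (simp add: rpow_strict_mono)
  qed
  moreover have "integral\<^sup>L M (f n) = frechet (s n) / rpow (dist (s n) x0) p"
    unfolding f_def frechet_def Wp_def by (rule integral_divide_zero)
  ultimately show False
    using s(1)[of n] divide_nonpos_nonneg[OF s(1) rpow_nonneg, of n "dist (s n) x0" p] by simp
qed

lemma bdd_below_frechet: "bdd_below (range frechet)"
proof -
  obtain R where R: "\<And>x. frechet x \<le> 0 \<Longrightarrow> dist x0 x \<le> R"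
    using bounded_frechet_sublevel unfolding bounded_any_center[of _ x0] by blast
  define I where "I = (\<integral>y. rpow (dist x0 y) (p - 1) \<partial>M)"
  have "0 \<le> I"
    unfolding I_def by (intro Bochner_Integration.integral_nonneg) (simp add: rpow_nonneg)
  have "- (p * R * I) \<le> frechet x" for x
  proof (cases "frechet x \<le> 0")
    case True
    then have "p * dist x x0 * I \<le> p * R * I"
      using R[of x] \<open>0 \<le> I\<close> p_ge_1 by (intro mult_right_mono mult_left_mono) (auto simp: dist_commute)
    then show ?thesis
      using frechet_lower_bound[of x] unfolding I_def by linarith
  next
    case False
    have "0 \<le> R"
      using R[of x0] by simp
    with False \<open>0 \<le> I\<close> p_ge_1 show ?thesis
      by (smt (verit) mult_nonneg_nonneg)
  qed
  then show ?thesis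
    by (intro bdd_belowI2)
qed

lemma rpow_dist_diff_dominated:
  fixes s :: "nat \<Rightarrow> 'a"
  assumes "bounded (range s)"
  obtains g where "integrable M g" "\<And>n y. \<bar>rpow (dist (s n) y) p - rpow (dist x y) p\<bar> \<le> g y"
proof -
  obtain R where "\<forall>z\<in>range s. dist x0 z \<le> R"
    using assms unfolding bounded_any_center[of _ x0] by blast
  then have R: "\<And>n. dist x0 (s n) \<le> R"
    by blast
  define T where "T = R + dist x0 x"
  have T: "0 \<le> T"
    unfolding T_def using R[of 0] zero_le_dist[of x0 "s 0"] zero_le_dist[of x0 x] by linarith
  show ?thesis
  proof
    show "integrable M (\<lambda>y. p * T * rpow (dist x0 y + T) (p - 1))"
      using T by (intro integrable_mult_right integrable_rpow_dist_shift)
    fix n y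
    have "dist (s n) x \<le> T"
      unfolding T_def using R[of n] dist_triangle3[of "s n" x x0] by linarith
    moreover have "rpow (dist x0 y + (dist x0 (s n) + dist x0 x)) (p - 1) \<le> rpow (dist x0 y + T) (p - 1)"
      unfolding T_def using R[of n] p_ge_1 by (intro rpow_mono) auto
    ultimately have "p * dist (s n) x * rpow (dist x0 y + (dist x0 (s n) + dist x0 x)) (p - 1)
        \<le> p * T * rpow (dist x0 y + T) (p - 1)"
      using p_ge_1 T by (intro mult_mono mult_left_mono rpow_nonneg) auto
    then show "\<bar>rpow (dist (s n) y) p - rpow (dist x y) p\<bar> \<le> p * T * rpow (dist x0 y + T) (p - 1)"
      using rpow_dist_diff_abs_le[OF p_ge_1, of "s n" y x x0] by linarith
  qed
qed

lemma frechet_fatou: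
  fixes s :: "nat \<Rightarrow> 'a"
  assumes bounded: "bounded (range s)" and lim: "(\<lambda>n. frechet (s n)) \<longlonglongrightarrow> m"
  obtains g where "integrable M g" "\<And>y. 1 \<le> g y"
    "(\<integral>\<^sup>+ y. liminf (\<lambda>n. ennreal (rpow (dist (s n) y) p - rpow (dist x y) p + g y)) \<partial>M)
      \<le> ennreal (m - frechet x + integral\<^sup>L M g)"
proof -
  obtain g where g: "integrable M g"
    and dom: "\<And>n y. \<bar>rpow (dist (s n) y) p - rpow (dist x y) p\<bar> \<le> g y"
    using rpow_dist_diff_dominated[OF bounded] by blast
  show ?thesis
  proof (rule that)
    show "integrable M (\<lambda>y. g y + 1)"
      using g by simp
    show "1 \<le> g y + 1" for y
      using dom[of 0 y] by linarith
    have minorant: "0 \<le> rpow (dist (s n) y) p - rpow (dist x y) p + (g y + 1)" for n y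
      using dom[of n y] by linarith
    have "(\<integral>\<^sup>+ y. liminf (\<lambda>n. ennreal (rpow (dist (s n) y) p - rpow (dist x y) p + (g y + 1))) \<partial>M)
        \<le> liminf (\<lambda>n. ennreal ((\<integral>y. rpow (dist (s n) y) p - rpow (dist x y) p \<partial>M)
          + integral\<^sup>L M (\<lambda>y. g y + 1)))"
      using g minorant by (intro fatou_integrable_minorant integrable_rpow_dist_diff) auto
    also have "\<dots> = ennreal (m - frechet x + integral\<^sup>L M (\<lambda>y. g y + 1))"
      unfolding Wp_def[symmetric] Wp_eq_frechet_diff using lim
      by (intro lim_imp_Liminf tendsto_ennrealI tendsto_intros) auto
    finally show "(\<integral>\<^sup>+ y. liminf (\<lambda>n. ennreal (rpow (dist (s n) y) p - rpow (dist x y) p + (g y + 1))) \<partial>M)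
        \<le> ennreal (m - frechet x + integral\<^sup>L M (\<lambda>y. g y + 1))" .
  qed
qed

end

locale weak_finite_moment = finite_moment +
  fixes w :: "(nat \<Rightarrow> 'a) \<Rightarrow> 'a \<Rightarrow> bool"
  assumes weak: "is_weak_convergence w"
begin

lemma frechet_weakly_lsc:
  assumes ws: "w s x" and bounded: "bounded (range s)"
    and lim: "(\<lambda>n. frechet (s n)) \<longlonglongrightarrow> m"
  shows "frechet x \<le> m"
proof -
  obtain g where g: "integrable M g" and g_ge_1: "\<And>y. 1 \<le> g y"
    and fatou: "(\<integral>\<^sup>+ y. liminf (\<lambda>n. ennreal (rpow (dist (s n) y) p - rpow (dist x y) p + g y)) \<partial>M)
      \<le> ennreal (m - frechet x + integral\<^sup>L M g)"
    using frechet_fatou[OF bounded lim] by blast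
  have "1 \<le> integral\<^sup>L M g"
    using integral_mono[OF integrable_const g g_ge_1] by (simp add: prob_space)
  have "ennreal (integral\<^sup>L M g) = (\<integral>\<^sup>+ y. ennreal (g y) \<partial>M)"
    using g g_ge_1 by (intro nn_integral_eq_integral[symmetric]) (auto intro: order_trans[OF zero_le_one])
  also have "\<dots> \<le> (\<integral>\<^sup>+ y. liminf (\<lambda>n. ennreal (rpow (dist (s n) y) p - rpow (dist x y) p + g y)) \<partial>M)"
  proof (intro nn_integral_mono ennreal_le_Liminf)
    fix y and \<epsilon> :: real assume "0 < \<epsilon>"
    with p_ge_1 weak_convergence_liminf_dist[OF weak ws]
    have "eventually (\<lambda>n. rpow (dist x y) p - \<epsilon> < rpow (dist (s n) y) p) sequentially"
      by (intro eventually_rpow_gt_of_le_liminf) auto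
    then show "eventually (\<lambda>n. g y - \<epsilon> < rpow (dist (s n) y) p - rpow (dist x y) p + g y) sequentially"
      by (rule eventually_mono) simp
  qed
  also have "\<dots> \<le> ennreal (m - frechet x + integral\<^sup>L M g)"
    by (rule fatou)
  finally show ?thesis
    using \<open>1 \<le> integral\<^sup>L M g\<close> by (simp add: ennreal_le_iff2)
qed

lemma frechet_weak_tendsto_imp_liminf_dist_le:
  assumes ws: "w s x" and bounded: "bounded (range s)"
    and lim: "(\<lambda>n. frechet (s n)) \<longlonglongrightarrow> frechet x"
  obtains y where "liminf (\<lambda>n. ereal (dist (s n) y)) \<le> ereal (dist x y)"
proof (rule ccontr)
  assume "\<not> thesis"
  with that have less: "ereal (dist x y) < liminf (\<lambda>n. ereal (dist (s n) y))" for y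
    by (meson not_le)
  obtain g where g: "integrable M g" and g_ge_1: "\<And>y. 1 \<le> g y"
    and fatou: "(\<integral>\<^sup>+ y. liminf (\<lambda>n. ennreal (rpow (dist (s n) y) p - rpow (dist x y) p + g y)) \<partial>M)
      \<le> ennreal (frechet x - frechet x + integral\<^sup>L M g)"
    using frechet_fatou[OF bounded lim] by blast
  define L where "L y = liminf (\<lambda>n. ennreal (rpow (dist (s n) y) p - rpow (dist x y) p + g y))" for y
  have g_nonneg: "0 \<le> g y" for y
    using g_ge_1[of y] by linarith
  have g_less_L: "ennreal (g y) < L y" for y
  proof -
    obtain \<eta> where "0 < \<eta>"
      and ev: "eventually (\<lambda>n. rpow (dist x y) p + \<eta> \<le> rpow (dist (s n) y) p) sequentially"
      using eventually_rpow_ge_of_less_liminf[OF p_ge_1 _ less] by auto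
    have "ennreal (g y) < ennreal (g y + \<eta>)"
      using \<open>0 < \<eta>\<close> g_nonneg[of y] by (simp add: ennreal_lessI)
    also have "\<dots> \<le> L y"
      unfolding L_def using ev by (intro Liminf_bounded) (auto elim!: eventually_mono intro: ennreal_leI)
    finally show ?thesis .
  qed
  have "(\<integral>\<^sup>+ y. L y \<partial>M) \<le> (\<integral>\<^sup>+ y. ennreal (g y) \<partial>M)"
    using fatou g g_nonneg unfolding L_def by (simp add: nn_integral_eq_integral)
  also have "\<dots> < (\<integral>\<^sup>+ y. L y \<partial>M)"
  proof (rule nn_integral_less)
    show "(\<lambda>y. ennreal (g y)) \<in> borel_measurable M" "L \<in> borel_measurable M"
      unfolding L_def using borel_measurable_integrable[OF g] by measurable
    show "(\<integral>\<^sup>+ y. ennreal (g y) \<partial>M) \<noteq> \<infinity>"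
      using g g_nonneg by (simp add: nn_integral_eq_integral)
    show "AE y in M. ennreal (g y) \<le> L y"
      using g_less_L by (simp add: less_imp_le)
    show "\<not> (AE y in M. L y \<le> ennreal (g y))"
      using g_less_L by (simp add: not_le[symmetric] AE_False)
  qed
  finally show False
    by simp
qed

lemma frechet_has_minimiser:
  obtains x where "\<And>x'. frechet x \<le> frechet x'"
proof -
  define K where "K = {x. frechet x \<le> 0}"
  have "x0 \<in> K"
    by (simp add: K_def)
  have "bdd_below (frechet ` K)"
    using bdd_below_frechet by (rule bdd_below_mono) auto
  define m where "m = Inf (frechet ` K)"
  have "m \<in> closure (frechet ` K)"
    unfolding m_def using \<open>x0 \<in> K\<close> \<open>bdd_below (frechet ` K)\<close> by (intro closure_contains_Inf) auto
  then obtain u where u: "\<And>n. u n \<in> frechet ` K" and lim: "u \<longlonglongrightarrow> m"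
    unfolding closure_sequential by blast
  have "\<exists>s. \<forall>n. s n \<in> K \<and> u n = frechet (s n)"
    using u by (intro choice) blast
  then obtain s where s: "\<And>n. s n \<in> K" and u_eq: "\<And>n. u n = frechet (s n)"
    by blast
  have "bounded (range s)"
    by (rule bounded_subset[OF bounded_frechet_sublevel]) (use s in \<open>auto simp: K_def\<close>)
  then obtain r x where r: "strict_mono r" and ws: "w (s \<circ> r) x"
    using weak_convergence_bounded_subseq[OF weak] by blast
  have "frechet x \<le> m"
  proof (rule frechet_weakly_lsc[OF ws])
    show "bounded (range (s \<circ> r))"
      using \<open>bounded (range s)\<close> by (rule bounded_subset) auto
    show "(\<lambda>n. frechet ((s \<circ> r) n)) \<longlonglongrightarrow> m"
      using LIMSEQ_subseq_LIMSEQ[OF lim r] by (simp add: o_def u_eq)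
  qed
  moreover have m_le: "m \<le> frechet x'" for x'
  proof (cases "x' \<in> K")
    case True
    then show ?thesis
      unfolding m_def using \<open>bdd_below (frechet ` K)\<close> by (intro cInf_lower) auto
  next
    case False
    have "m \<le> frechet x0"
      unfolding m_def using \<open>x0 \<in> K\<close> \<open>bdd_below (frechet ` K)\<close> by (rule cInf_lower[OF imageI])
    with False show ?thesis
      by (simp add: K_def)
  qed
  ultimately show ?thesis
    using that order_trans by metis
qed

lemma compact_frechet_minimisers: "compact {x. \<forall>x'. frechet x \<le> frechet x'}" (is "compact ?A")
  unfolding compact_eq_seq_compact_metric seq_compact_def
proof (intro allI impI)
  fix s :: "nat \<Rightarrow> 'a" assume "\<forall>n. s n \<in> ?A"
  then have min: "\<And>n x'. frechet (s n) \<le> frechet x'"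
    by blast
  then have const: "frechet (s n) = frechet (s 0)" for n
    by (meson antisym)
  have "bounded (range s)"
    by (rule bounded_subset[OF bounded_frechet_sublevel]) (use min[of _ x0] in auto)
  then obtain r1 x where r1: "strict_mono r1" and ws: "w (s \<circ> r1) x"
    using weak_convergence_bounded_subseq[OF weak] by blast
  have bounded: "bounded (range (s \<circ> r1))"
    using \<open>bounded (range s)\<close> by (rule bounded_subset) auto
  have "(\<lambda>n. frechet ((s \<circ> r1) n)) = (\<lambda>_. frechet (s 0))"
    using const by (intro ext) (metis comp_apply)
  then have lim: "(\<lambda>n. frechet ((s \<circ> r1) n)) \<longlonglongrightarrow> frechet (s 0)"
    by simp
  then have "frechet x \<le> frechet (s 0)"
    by (rule frechet_weakly_lsc[OF ws bounded])
  then have "x \<in> ?A" and "frechet x = frechet (s 0)"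
    using min[of 0] by (auto intro: order_trans antisym)
  then obtain y where "liminf (\<lambda>n. ereal (dist ((s \<circ> r1) n) y)) \<le> ereal (dist x y)"
    using frechet_weak_tendsto_imp_liminf_dist_le[OF ws bounded] lim by metis
  then obtain r2 where r2: "strict_mono r2" and "((s \<circ> r1) \<circ> r2) \<longlonglongrightarrow> x"
    using weak_convergence_subseq_tendsto[OF weak ws] by blast
  then show "\<exists>l\<in>?A. \<exists>r. strict_mono r \<and> (s \<circ> r) \<longlonglongrightarrow> l"
    using \<open>x \<in> ?A\<close> strict_mono_o[OF r1 r2] by (metis o_assoc)
qed

end

theorem corollary3p10:
  fixes p :: real and \<mu> :: "'a::metric_space measure"
  assumes "separable_metric TYPE('a)"
    and "admits_weak_convergence TYPE('a)"
    and "p \<ge> 1"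
    and "\<mu> \<in> P_moment (p - 1)"
  shows "Mp p \<mu> \<noteq> {} \<and> compact (Mp p \<mu>)"
proof -
  obtain w :: "(nat \<Rightarrow> 'a) \<Rightarrow> 'a \<Rightarrow> bool" where "is_weak_convergence w"
    using assms(2) unfolding admits_weak_convergence_def by blast
  moreover obtain x0 where "prob_space \<mu>" "sets \<mu> = sets borel"
    and "(\<integral>\<^sup>+ y. ennreal (rpow (dist x0 y) (p - 1)) \<partial>\<mu>) < \<infinity>"
    using assms(4) unfolding P_moment_def by blast
  ultimately interpret weak_finite_moment \<mu> p x0 w
    using assms(3) by (simp add: weak_finite_moment_def weak_finite_moment_axioms_def
      finite_moment_def finite_moment_axioms_def)
  obtain x where "\<And>x'. frechet x \<le> frechet x'"
    using frechet_has_minimiser by blast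
  then show ?thesis
    using compact_frechet_minimisers by (auto simp: Mp_eq_frechet_minimisers)
qed

end
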